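(* Let $G=(V,E)$ be an $(n-4)$-regular graph on $n>4$ nodes and let $\emptyset\ne V_i\subseteq V$ with $|V_i|=t_in$. Then $n(n-4)\,\mathsf M(V_i)\le (4t_i^2-t_i)\,n$. In particular, if $|V_i|\le n/4$ then $\mathsf M(V_i)\le 0$, and if $|V_i|=(\frac14+\delta)n$ with $\delta>0$ then $n(n-4)\mathsf M(V_i)\le(4\delta^2+\delta)n$.
   Context: For a finite simple undirected graph $G=(V,E)$ with $m=|E|\ge1$ edges, degrees $d_v$, and $a_{u,v}=1$ if $\{u,v\}\in E$ and $0$ otherwise: for $C\subseteq V$, $\mathsf M(C)=\frac{1}{2m}\sum_{u\in C}\sum_{v\in C}\big(a_{u,v}-\frac{d_ud_v}{2m}\big)$, the sum over all ordered pairs including $u=v$. *)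

theory Defs
  imports Complex_Main
begin

definition simple_graph :: "'a set \<Rightarrow> 'a set set \<Rightarrow> bool" where
  "simple_graph V E \<longleftrightarrow> finite V \<and> (\<forall>e\<in>E. \<exists>u v. e = {u, v} \<and> u \<noteq> v \<and> u \<in> V \<and> v \<in> V)"

definition adj :: "'a set set \<Rightarrow> 'a \<Rightarrow> 'a \<Rightarrow> real" where
  "adj E u v = (if {u, v} \<in> E then 1 else 0)"

definition degree :: "'a set \<Rightarrow> 'a set set \<Rightarrow> 'a \<Rightarrow> nat" where
  "degree V E v = card {u \<in> V. {u, v} \<in> E}"

definition regular :: "'a set \<Rightarrow> 'a set set \<Rightarrow> nat \<Rightarrow> bool" where
  "regular V E k \<longleftrightarrow> (\<forall>v\<in>V. degree V E v = k)"

definition modularity :: "'a set \<Rightarrow> 'a set set \<Rightarrow> 'a set \<Rightarrow> real" where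
  "modularity V E C =
    (let m = real (card E) in
     (1 / (2 * m)) * (\<Sum>u\<in>C. \<Sum>v\<in>C. adj E u v - real (degree V E u) * real (degree V E v) / (2 * m)))"

end

theory Submission
  imports Defs
begin

(* In a k-regular simple graph on N vertices the handshake lemma
   gives 2m = N k, so the null-model term of the modularity of C is the same for every
   pair of vertices and sums to |C|^2 k / N.  The adjacency term is at most |C|(|C| - 1),
   because a simple graph has no loops and each pair contributes at most 1.  Hence

       N k M(C) <= |C|(|C| - 1) - |C|^2 k / N = |C|^2 (N - k) / N - |C|.

   For k = N - 4 the right-hand side is 4|C|^2 / N - |C|, and the three claims of the
   theorem follow by substituting |C| = t N, resp. |C| = (1/4 + delta) N, and by noting
   that |C| (4|C|/N - 1) <= 0 when |C| <= N/4.
   The file proves the handshake lemma, the loop-freeness bound on internal adjacencies,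
   the closed form of the modularity in regular graphs and the resulting upper bound,
   and finally derives the theorem. *)

(* Handshake lemma: each edge {u,v} is counted once from u and once from v. *)
lemma handshake:
  assumes sg: "simple_graph V E"
  shows "(\<Sum>v\<in>V. degree V E v) = 2 * card E"
proof -
  have fV: "finite V" using sg by (simp add: simple_graph_def)
  have fE: "finite E"
  proof (rule finite_subset)
    show "E \<subseteq> Pow V" using sg by (auto simp: simple_graph_def)
  qed (use fV in simp)
  define orient where "orient e = {p \<in> V \<times> V. {snd p, fst p} = e}" for e
  have incidences: "(SIGMA v:V. {u\<in>V. {u,v}\<in>E}) = (\<Union>e\<in>E. orient e)"
    by (auto simp: orient_def)
  have two_orientations: "card (orient e) = 2" if "e \<in> E" for e
  proof -
    obtain a b where ab: "e = {a,b}" "a \<noteq> b" "a \<in> V" "b \<in> V"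
      using sg \<open>e \<in> E\<close> unfolding simple_graph_def by meson
    then have "orient e = {(b,a),(a,b)}" by (auto simp: orient_def doubleton_eq_iff)
    then show ?thesis using ab by simp
  qed
  have "(\<Sum>v\<in>V. degree V E v) = card (SIGMA v:V. {u\<in>V. {u,v}\<in>E})"
    using fV by (simp add: degree_def card_SigmaI)
  also have "\<dots> = (\<Sum>e\<in>E. card (orient e))"
    unfolding incidences
    by (rule card_UN_disjoint) (use fE fV in \<open>auto simp: orient_def\<close>)
  also have "\<dots> = 2 * card E" using two_orientations by simp
  finally show ?thesis .
qed

lemma adj_self_zero:
  assumes "simple_graph V E"
  shows "adj E u u = 0"
  using assms by (auto simp: adj_def simple_graph_def)

(* Adjacencies inside a finite vertex set C: every vertex has at most |C| - 1
   neighbours in C, since there are no loops. *)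
lemma internal_adjacency_bound:
  assumes sg: "simple_graph V E" and fC: "finite C"
  shows "(\<Sum>u\<in>C. \<Sum>v\<in>C. adj E u v) \<le> real (card C) * (real (card C) - 1)"
proof -
  have row: "(\<Sum>v\<in>C. adj E u v) \<le> real (card C) - 1" if "u \<in> C" for u
  proof -
    have "(\<Sum>v\<in>C. adj E u v) = adj E u u + (\<Sum>v\<in>C - {u}. adj E u v)"
      using fC that by (rule sum.remove)
    also have "\<dots> = (\<Sum>v\<in>C - {u}. adj E u v)" by (simp add: adj_self_zero[OF sg])
    also have "\<dots> \<le> (\<Sum>v\<in>C - {u}. 1)" by (rule sum_mono) (simp add: adj_def)
    also have "\<dots> = real (card C) - 1"
    proof -
      have "card C \<ge> 1" using that fC by (metis One_nat_def Suc_leI card_gt_0_iff empty_iff)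
      then show ?thesis using that fC by (simp add: card_Diff_singleton of_nat_diff)
    qed
    finally show ?thesis .
  qed
  have "(\<Sum>u\<in>C. \<Sum>v\<in>C. adj E u v) \<le> (\<Sum>u\<in>C. real (card C) - 1)"
    by (rule sum_mono) (rule row)
  then show ?thesis by (simp add: mult.commute)
qed

(* Closed form of the modularity in a k-regular simple graph with k > 0:
   the null-model term contributes k^2 / (2m) = k / N for every ordered pair. *)
lemma modularity_regular:
  assumes sg: "simple_graph V E" and reg: "regular V E k" and "k > 0"
    and "C \<subseteq> V" and "V \<noteq> {}"
  shows "real (card V) * real k * modularity V E C
         = (\<Sum>u\<in>C. \<Sum>v\<in>C. adj E u v) - real (card C) ^ 2 * real k / real (card V)"
proof -
  let ?N = "real (card V)"
  have "finite V" using sg by (simp add: simple_graph_def)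
  then have Npos: "?N > 0" using \<open>V \<noteq> {}\<close> by (simp add: card_gt_0_iff)
  have kpos: "real k > 0" using \<open>k > 0\<close> by simp
  have two_m: "2 * real (card E) = ?N * real k"
    using handshake[OF sg] reg by (simp add: regular_def flip: of_nat_mult)
  have deg: "real (degree V E v) = real k" if "v \<in> C" for v
    using reg that \<open>C \<subseteq> V\<close> by (auto simp: regular_def)
  have null_model: "(\<Sum>u\<in>C. \<Sum>v\<in>C. real (degree V E u) * real (degree V E v) / (2 * real (card E)))
      = real (card C) ^ 2 * real k / ?N"
    using deg Npos kpos by (simp add: two_m power2_eq_square)
  show ?thesis
    unfolding modularity_def Let_def
    using null_model two_m Npos kpos by (simp add: sum_subtractf)
qed

lemma modularity_regular_upper:
  assumes sg: "simple_graph V E" and reg: "regular V E k" and "k > 0"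
    and "C \<subseteq> V" and "V \<noteq> {}"
  shows "real (card V) * real k * modularity V E C
         \<le> real (card C) ^ 2 * (real (card V) - real k) / real (card V) - real (card C)"
proof -
  have "finite C"
    using sg \<open>C \<subseteq> V\<close> by (auto simp: simple_graph_def intro: finite_subset)
  have Npos: "real (card V) > 0"
    using sg \<open>V \<noteq> {}\<close> by (simp add: simple_graph_def card_gt_0_iff)
  have "real (card V) * real k * modularity V E C
        \<le> real (card C) * (real (card C) - 1) - real (card C) ^ 2 * real k / real (card V)"
    using modularity_regular[OF assms] internal_adjacency_bound[OF sg \<open>finite C\<close>] by simp
  also have "\<dots> = real (card C) ^ 2 * (real (card V) - real k) / real (card V) - real (card C)"
    using Npos by (simp add: field_simps power2_eq_square)
  finally show ?thesis .
qed

theorem lemma6: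
  fixes V :: "'a set" and E :: "'a set set" and n :: nat and Vi :: "'a set" and t :: real
  assumes "simple_graph V E"
    and "card V = n" and "n > 4"
    and "regular V E (n - 4)"
    and "Vi \<noteq> {}" and "Vi \<subseteq> V"
    and "real (card Vi) = t * real n"
  shows "real n * (real n - 4) * modularity V E Vi \<le> (4 * t\<^sup>2 - t) * real n
         \<and> (real (card Vi) \<le> real n / 4 \<longrightarrow> modularity V E Vi \<le> 0)
         \<and> (\<forall>\<delta>::real. \<delta> > 0 \<longrightarrow> real (card Vi) = (1/4 + \<delta>) * real n \<longrightarrow>
               real n * (real n - 4) * modularity V E Vi \<le> (4 * \<delta>\<^sup>2 + \<delta>) * real n)"
proof -
  let ?c = "real (card Vi)" and ?M = "modularity V E Vi"
  have npos: "real n > 0" using \<open>n > 4\<close> by simp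
  have "V \<noteq> {}" using \<open>Vi \<noteq> {}\<close> \<open>Vi \<subseteq> V\<close> by blast
  have bound: "real n * (real n - 4) * ?M \<le> 4 * ?c ^ 2 / real n - ?c"
    using modularity_regular_upper[OF assms(1,4) _ assms(6) \<open>V \<noteq> {}\<close>] \<open>n > 4\<close> assms(2)
    by (simp add: of_nat_diff mult.commute)
  have part1: "real n * (real n - 4) * ?M \<le> (4 * t\<^sup>2 - t) * real n"
  proof -
    have "4 * ?c ^ 2 / real n - ?c = (4 * t\<^sup>2 - t) * real n"
      using npos assms(7) by (simp add: field_simps power2_eq_square)
    then show ?thesis using bound by simp
  qed
  have part2: "?M \<le> 0" if small: "?c \<le> real n / 4"
  proof -
    have "4 * ?c ^ 2 / real n - ?c = ?c * (4 * ?c / real n - 1)"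
      using npos by (simp add: field_simps power2_eq_square)
    also have "\<dots> \<le> 0"
      using small npos by (intro mult_nonneg_nonpos) (auto simp: field_simps)
    finally have "real n * (real n - 4) * ?M \<le> 0" using bound by simp
    then show ?thesis using \<open>n > 4\<close> by (simp add: mult_le_0_iff zero_less_mult_iff)
  qed
  have part3: "real n * (real n - 4) * ?M \<le> (4 * \<delta>\<^sup>2 + \<delta>) * real n"
    if "?c = (1/4 + \<delta>) * real n" for \<delta>
  proof -
    have "4 * ?c ^ 2 / real n - ?c = (4 * \<delta>\<^sup>2 + \<delta>) * real n"
      using npos that by (simp add: field_simps power2_eq_square)
    then show ?thesis using bound by simp
  qed
  show ?thesis using part1 part2 part3 by blast
qed

end
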